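(* Let $M$ be a locally-finite map in $\mathbb{E}^2$ with exactly one end such that $V(M)$ is a locally finite collection of vertices, and suppose $G\le\mathrm{Isom}(\mathbb{E}^2)$ acts quasi-transitively on $M$. Then $G$ is a wallpaper group.
   Context: A map $M$ in a surface $X$ is a (simple, connected, infinite) graph embedded in $X$: vertices are distinct points, edges are curves meeting only at common endpoints, and each face is homeomorphic to an open disc. Locally-finite and number of ends refer to the underlying graph. $V(M)$ is a locally finite collection of vertices if every compact subset contains only finitely many vertices of $M$. $G$ acts on $M$ if each $g\in G$ maps $V(M)$ to itself inducing a graph automorphism (and maps the embedded map to itself); quasi-transitively means finitely many orbits on $V(M)$. A wallpaper group is a discrete group of isometries of $\mathbb{E}^2$ containing two linearly independent translations. *)

theory Defs
  imports "HOL-Analysis.Analysis"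
begin

text \<open>The Euclidean plane E^2 is modelled by the type complex (a 2-dimensional real
Euclidean space). A map M is given by its vertex set V (points of the plane) and its
edge set E, each edge being the image (point set) of an arc joining two distinct vertices.\<close>

definition is_edge :: "complex set \<Rightarrow> complex set \<Rightarrow> bool" where
  "is_edge V e \<longleftrightarrow> (\<exists>\<gamma>. arc \<gamma> \<and> path_image \<gamma> = e \<and>
      pathstart \<gamma> \<in> V \<and> pathfinish \<gamma> \<in> V \<and> e \<inter> V = {pathstart \<gamma>, pathfinish \<gamma>})"

definition adj :: "complex set \<Rightarrow> complex set set \<Rightarrow> complex \<Rightarrow> complex \<Rightarrow> bool" where
  "adj V E u v \<longleftrightarrow> u \<noteq> v \<and> (\<exists>e\<in>E. e \<inter> V = {u, v})"

definition connected_avoiding ::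
  "complex set \<Rightarrow> complex set set \<Rightarrow> complex set \<Rightarrow> complex \<Rightarrow> complex \<Rightarrow> bool" where
  "connected_avoiding V E S u v \<longleftrightarrow>
     (\<exists>p n. p 0 = u \<and> p n = v \<and> (\<forall>i\<le>n. p i \<in> V - S) \<and>
            (\<forall>i<n. adj V E (p i) (p (Suc i))))"

definition graph_connected :: "complex set \<Rightarrow> complex set set \<Rightarrow> bool" where
  "graph_connected V E \<longleftrightarrow> (\<forall>u\<in>V. \<forall>v\<in>V. connected_avoiding V E {} u v)"

definition locally_finite_graph :: "complex set \<Rightarrow> complex set set \<Rightarrow> bool" where
  "locally_finite_graph V E \<longleftrightarrow> (\<forall>u\<in>V. finite {v. adj V E u v})"

text \<open>Ends of a graph: equivalence classes of rays; two rays are equivalent if for every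
finite vertex set S their tails lie in the same component of the graph minus S.\<close>
definition is_ray :: "complex set \<Rightarrow> complex set set \<Rightarrow> (nat \<Rightarrow> complex) \<Rightarrow> bool" where
  "is_ray V E r \<longleftrightarrow> inj r \<and> (\<forall>n. r n \<in> V) \<and> (\<forall>n. adj V E (r n) (r (Suc n)))"

definition ray_equiv ::
  "complex set \<Rightarrow> complex set set \<Rightarrow> (nat \<Rightarrow> complex) \<Rightarrow> (nat \<Rightarrow> complex) \<Rightarrow> bool" where
  "ray_equiv V E r r' \<longleftrightarrow>
     (\<forall>S. finite S \<longrightarrow> (\<exists>N. \<forall>i\<ge>N. \<forall>j\<ge>N. connected_avoiding V E S (r i) (r' j)))"

definition one_ended :: "complex set \<Rightarrow> complex set set \<Rightarrow> bool" where
  "one_ended V E \<longleftrightarrow> (\<exists>r. is_ray V E r) \<and>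
     (\<forall>r r'. is_ray V E r \<longrightarrow> is_ray V E r' \<longrightarrow> ray_equiv V E r r')"

text \<open>A map in the plane: simple, connected, infinite graph embedded in E^2 whose faces
(components of the complement of the embedded graph) are open discs.\<close>
definition plane_map :: "complex set \<Rightarrow> complex set set \<Rightarrow> bool" where
  "plane_map V E \<longleftrightarrow>
     infinite V \<and>
     (\<forall>e\<in>E. is_edge V e) \<and>
     (\<forall>e\<in>E. \<forall>e'\<in>E. e \<noteq> e' \<longrightarrow> e \<inter> e' \<subseteq> V \<and> e \<inter> V \<noteq> e' \<inter> V) \<and>
     graph_connected V E \<and>
     (\<forall>F\<in>components (- (V \<union> \<Union>E)). F homeomorphic ball (0::complex) 1)"

definition locally_finite_vertices :: "complex set \<Rightarrow> bool" where
  "locally_finite_vertices V \<longleftrightarrow> (\<forall>K. compact K \<longrightarrow> finite (V \<inter> K))"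

definition isometry :: "(complex \<Rightarrow> complex) \<Rightarrow> bool" where
  "isometry g \<longleftrightarrow> bij g \<and> (\<forall>x y. dist (g x) (g y) = dist x y)"

definition isom_group :: "(complex \<Rightarrow> complex) set \<Rightarrow> bool" where
  "isom_group G \<longleftrightarrow> (\<forall>g\<in>G. isometry g) \<and> id \<in> G \<and>
     (\<forall>g\<in>G. \<forall>h\<in>G. g \<circ> h \<in> G) \<and> (\<forall>g\<in>G. inv g \<in> G)"

definition acts_on_map ::
  "(complex \<Rightarrow> complex) set \<Rightarrow> complex set \<Rightarrow> complex set set \<Rightarrow> bool" where
  "acts_on_map G V E \<longleftrightarrow> (\<forall>g\<in>G. g ` V = V \<and> (\<lambda>e. g ` e) ` E = E)"

definition quasi_transitive ::
  "(complex \<Rightarrow> complex) set \<Rightarrow> complex set \<Rightarrow> bool" where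
  "quasi_transitive G V \<longleftrightarrow> finite ((\<lambda>v. (\<lambda>g. g v) ` G) ` V)"

text \<open>Discreteness in Isom(E^2) (compact-open topology): the identity is isolated, i.e.
some basic neighbourhood of id (uniformly e-close to id on a closed disc) meets G only in id.\<close>
definition discrete_isom_group :: "(complex \<Rightarrow> complex) set \<Rightarrow> bool" where
  "discrete_isom_group G \<longleftrightarrow> (\<exists>R>0. \<exists>e>0. \<forall>g\<in>G.
      (\<forall>x\<in>cball 0 R. dist (g x) x < e) \<longrightarrow> g = id)"

definition wallpaper_group :: "(complex \<Rightarrow> complex) set \<Rightarrow> bool" where
  "wallpaper_group G \<longleftrightarrow> isom_group G \<and> discrete_isom_group G \<and>
     (\<exists>c1 c2. c1 \<noteq> c2 \<and> independent {c1, c2} \<and>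
        (\<lambda>x. x + c1) \<in> G \<and> (\<lambda>x. x + c2) \<in> G)"

end

theory Submission
  imports Defs
begin

text \<open>
  Every isometry of the plane is z \<mapsto> a z + b or z \<mapsto> a (cnj z) + b with |a| = 1. If G contained
  no nontrivial translation, its orientation-preserving elements would commute (their commutators are
  translations) and so fix a common point c; the orbit of c would then have at most two points, every
  orbit would be bounded, hence finite because V is locally finite, and quasi-transitivity would make V
  finite. So G contains a translation by some t \<noteq> 0. If all translations in G were parallel to t,
  then G would have only finitely many linear parts and V would lie in a strip along t; as edges have
  bounded length, the finitely many vertices in a window across the strip would separate a ray heading
  in direction t from one heading in direction -t, contradicting one-endedness. Hence G contains
  translations by independent vectors t and t'. An element of G that is uniformly close to the identity
  on a large disc must fix the isolated vertices v, v + t and v + t', and is therefore the identity.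
\<close>

section \<open>Isometries of the complex plane\<close>

lemma isometry_complex_cases:
  fixes g :: "complex \<Rightarrow> complex"
  assumes dist_g: "\<And>x y. dist (g x) (g y) = dist x y"
  obtains (direct) a b where "cmod a = 1" "g = (\<lambda>z. a * z + b)"
    | (opposite) a b where "cmod a = 1" "g = (\<lambda>z. a * cnj z + b)"
proof -
  define a where "a = g 1 - g 0"
  have a1: "cmod a = 1" using dist_g[of 1 0] by (simp add: a_def dist_norm)
  hence a0: "a \<noteq> 0" by auto
  define f where "f z = (g z - g 0) / a" for z
  have g_f: "g z = a * f z + g 0" for z using a0 by (simp add: f_def)
  have dist_f: "cmod (f z - f w) = cmod (z - w)" for z w
  proof -
    have "f z - f w = (g z - g w) / a" by (simp add: f_def diff_divide_distrib)
    thus ?thesis using dist_g[of z w] by (simp add: norm_divide a1 dist_norm)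
  qed
  have f0: "f 0 = 0" and f1: "f 1 = 1" using a0 by (simp_all add: f_def a_def)
  \<comment> \<open>f fixes 0 and 1, so it preserves real parts and preserves or negates imaginary parts\<close>
  have f_pointwise: "f z = z \<or> f z = cnj z" for z
  proof -
    have "Re (f z)^2 + Im (f z)^2 = Re z^2 + Im z^2"
      using dist_f[of z 0] f0 by (simp add: cmod_def)
    moreover have "(Re (f z) - 1)^2 + Im (f z)^2 = (Re z - 1)^2 + Im z^2"
      using dist_f[of z 1] f1 by (simp add: cmod_def)
    ultimately have "Re (f z) = Re z" "Im (f z)^2 = Im z^2"
      by (simp_all add: power2_eq_square algebra_simps)
    thus ?thesis by (auto simp: complex_eq_iff power2_eq_iff)
  qed
  have "(\<forall>z. f z = z) \<or> (\<forall>z. f z = cnj z)"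
  proof (rule ccontr)
    assume "\<not> ?thesis"
    then obtain z w where "f z \<noteq> z" "f w \<noteq> cnj w" by auto
    with f_pointwise[of z] f_pointwise[of w]
    have z: "f z = cnj z" "Im z \<noteq> 0" and w: "f w = w" "Im w \<noteq> 0"
      by (auto simp: complex_eq_iff)
    have "cmod (cnj z - w) = cmod (z - w)" using dist_f[of z w] z w by simp
    hence "(Re z - Re w)^2 + (- Im z - Im w)^2 = (Re z - Re w)^2 + (Im z - Im w)^2"
      by (simp add: cmod_def)
    hence "Im z * Im w = 0" by (simp add: power2_eq_square algebra_simps)
    thus False using z w by simp
  qed
  thus thesis using that a1 g_f by (metis ext)
qed

lemma isometry_add:
  fixes g :: "complex \<Rightarrow> complex"
  assumes "\<And>x y. dist (g x) (g y) = dist x y"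
  shows "g (x + t) = g x + (g t - g 0)"
  by (cases rule: isometry_complex_cases[OF assms]) (simp_all add: algebra_simps)

lemma in_span_singleton_iff_Im_mult_cnj:
  fixes s t :: complex
  assumes "s \<noteq> 0"
  shows "t \<in> span {s} \<longleftrightarrow> Im (t * cnj s) = 0"
proof
  assume "t \<in> span {s}"
  then obtain r where "t = of_real r * s" by (auto simp: span_singleton scaleR_conv_of_real)
  thus "Im (t * cnj s) = 0" by (simp add: mult.assoc complex_mult_cnj del: of_real_power)
next
  assume "Im (t * cnj s) = 0"
  hence "t * cnj s = of_real (Re (t * cnj s))" by (simp add: complex_eq_iff)
  moreover have "t * of_real ((cmod s)^2) = (t * cnj s) * s"
    by (metis complex_norm_square mult.assoc mult.commute)
  ultimately have "t = of_real (Re (t * cnj s) / (cmod s)^2) * s"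
    using assms by (simp add: field_simps)
  thus "t \<in> span {s}" by (metis span_singleton scaleR_conv_of_real UNIV_I image_eqI)
qed

lemma isometry_fixing_triangle_is_id:
  fixes g :: "complex \<Rightarrow> complex"
  assumes "\<And>x y. dist (g x) (g y) = dist x y" "s \<noteq> 0" "t \<notin> span {s}"
    and "g v = v" "g (v + s) = v + s" "g (v + t) = v + t"
  shows "g = id"
  using assms(1)
proof (cases rule: isometry_complex_cases)
  case (direct a b)
  have v: "a * v + b = v" and vs: "a * (v + s) + b = v + s" using direct assms(4,5) by simp_all
  have "a * s = (a * (v + s) + b) - (a * v + b)" by (simp add: algebra_simps)
  hence "a * s = s" unfolding v vs by simp
  hence "a = 1" using \<open>s \<noteq> 0\<close> by simp
  thus ?thesis using direct v by (simp add: fun_eq_iff)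
next
  case (opposite a b)
  have v: "a * cnj v + b = v" and vs: "a * cnj (v + s) + b = v + s"
    and vt: "a * cnj (v + t) + b = v + t" using opposite assms(4-6) by simp_all
  have "a * cnj s = (a * cnj (v + s) + b) - (a * cnj v + b)"
    and "a * cnj t = (a * cnj (v + t) + b) - (a * cnj v + b)" by (simp_all add: algebra_simps)
  hence as: "a * cnj s = s" and at: "a * cnj t = t" unfolding v vs vt by simp_all
  have "t * cnj s = cnj t * (a * cnj s)" by (subst at[symmetric]) (simp add: mult_ac)
  also have "\<dots> = cnj (t * cnj s)" by (simp add: as)
  finally have "Im (t * cnj s) = - Im (t * cnj s)" by (metis cnj.sel(2))
  hence "Im (t * cnj s) = 0" by simp
  thus ?thesis using assms(2,3) in_span_singleton_iff_Im_mult_cnj by blast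
qed

definition orientation_preserving :: "(complex \<Rightarrow> complex) \<Rightarrow> bool" where
  "orientation_preserving g \<longleftrightarrow> (\<exists>a b. \<forall>z. g z = a * z + b)"

lemma orientation_preservingD:
  "orientation_preserving g \<Longrightarrow> g z = (g 1 - g 0) * z + g 0"
  by (auto simp: orientation_preserving_def)

lemma isometry_orientation_reversing:
  assumes "\<And>x y. dist (g x) (g y) = dist x y" and "\<not> orientation_preserving g"
  obtains a b where "g = (\<lambda>z. a * cnj z + b)"
  using assms(2) by (cases rule: isometry_complex_cases[OF assms(1)]) (auto simp: orientation_preserving_def)

lemma orientation_preserving_comp_reversing:
  assumes "\<And>x y. dist (g x) (g y) = dist x y" "\<not> orientation_preserving g"
    and "\<And>x y. dist (h x) (h y) = dist x y" "\<not> orientation_preserving h"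
  shows "orientation_preserving (g \<circ> h)"
proof -
  obtain a b where "g = (\<lambda>z. a * cnj z + b)" using assms(1,2) by (rule isometry_orientation_reversing)
  moreover obtain c d where "h = (\<lambda>z. c * cnj z + d)" using assms(3,4) by (rule isometry_orientation_reversing)
  ultimately have "g \<circ> h = (\<lambda>z. (a * cnj c) * z + (a * cnj d + b))"
    by (simp add: fun_eq_iff algebra_simps)
  thus ?thesis unfolding orientation_preserving_def by auto
qed

lemma orientation_preserving_commutator:
  assumes "orientation_preserving g" "orientation_preserving h"
  shows "g (h z) = h (g z) + (g (h 0) - h (g 0))"
  using assms by (auto simp: orientation_preserving_def algebra_simps)

abbreviation transl :: "complex \<Rightarrow> complex \<Rightarrow> complex" where
  "transl t \<equiv> \<lambda>x. x + t"

abbreviation orbit :: "(complex \<Rightarrow> complex) set \<Rightarrow> complex \<Rightarrow> complex set" where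
  "orbit G v \<equiv> (\<lambda>g. g v) ` G"

section \<open>Walks, rays and locally finite vertex sets\<close>

lemma walk_contains_ray:
  assumes walk: "\<And>m. adj V E (w m) (w (Suc m))" and finite_fibres: "\<And>x. finite {m. w m = x}"
  obtains T where "strict_mono T" "is_ray V E (w \<circ> T)"
proof -
  define last_visit where "last_visit m = Max {m'. w m' = w m}" for m
  have last_visit: "w (last_visit m) = w m" "m \<le> last_visit m" for m
    using Max_in[OF finite_fibres, of "w m"] Max_ge[OF finite_fibres, of m "w m"]
    by (auto simp: last_visit_def)
  have last_visit_eq: "w m = w m' \<Longrightarrow> last_visit m = last_visit m'" for m m'
    by (simp add: last_visit_def)
  \<comment> \<open>leaving each vertex after its last visit, no vertex is visited twice\<close>
  define T where "T = rec_nat (last_visit 0) (\<lambda>_ Tk. last_visit (Suc Tk))"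
  have T_Suc: "T (Suc k) = last_visit (Suc (T k))" for k by (simp add: T_def)
  have "strict_mono T"
    unfolding strict_mono_Suc_iff using T_Suc last_visit(2) by (metis Suc_le_lessD)
  moreover have T_last: "last_visit (T k) = T k" for k
    by (cases k) (simp_all add: T_def last_visit_eq[OF last_visit(1)])
  have "inj (w \<circ> T)"
  proof (rule injI)
    fix i j assume "(w \<circ> T) i = (w \<circ> T) j"
    hence "T i = T j" using last_visit_eq T_last by (metis comp_apply)
    thus "i = j" using strict_mono_eq[OF \<open>strict_mono T\<close>] by simp
  qed
  moreover have "adj V E ((w \<circ> T) k) ((w \<circ> T) (Suc k))" for k
    using walk[of "T k"] last_visit(1)[of "Suc (T k)"] T_Suc[of k] by simp
  moreover have "(w \<circ> T) k \<in> V" for k using walk[of "T k"] unfolding adj_def by auto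
  ultimately show thesis using that unfolding is_ray_def by blast
qed

lemma walk_crosses_slab:
  fixes f :: "nat \<Rightarrow> real"
  assumes "0 \<le> K" "K < f 0" "f n < - K" "\<And>m. m < n \<Longrightarrow> \<bar>f (Suc m) - f m\<bar> \<le> 2 * K"
  shows "\<exists>m\<le>n. \<bar>f m\<bar> \<le> K"
proof (rule ccontr)
  assume outside: "\<not> ?thesis"
  have "m \<le> n \<Longrightarrow> K < f m" for m
  proof (induction m)
    case (Suc m)
    thus ?case using assms(4)[of m] outside by force
  qed (use assms(2) in simp)
  thus False using assms(1,3) by force
qed

lemma short_edges_walk_crosses_window:
  assumes "\<And>x y. adj V E x y \<Longrightarrow> cmod (x - y) \<le> D" "\<And>m. m < n \<Longrightarrow> adj V E (p m) (p (Suc m))"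
    and "\<bar>D\<bar> * cmod t < Re (p 0 * cnj t)" "Re (p n * cnj t) < - (\<bar>D\<bar> * cmod t)"
  obtains m where "m \<le> n" "\<bar>Re (p m * cnj t)\<bar> \<le> \<bar>D\<bar> * cmod t"
proof -
  have "\<bar>Re (p (Suc m) * cnj t) - Re (p m * cnj t)\<bar> \<le> 2 * (\<bar>D\<bar> * cmod t)" if "m < n" for m
  proof -
    have "\<bar>Re ((p (Suc m) - p m) * cnj t)\<bar> \<le> cmod (p (Suc m) - p m) * cmod t"
      using abs_Re_le_cmod[of "(p (Suc m) - p m) * cnj t"] by (simp add: norm_mult)
    also have "\<dots> \<le> \<bar>D\<bar> * cmod t"
      using assms(1)[OF assms(2)[OF that]] by (intro mult_right_mono) (auto simp: norm_minus_commute)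
    finally show ?thesis by (simp add: left_diff_distrib)
  qed
  thus thesis using walk_crosses_slab[of "\<bar>D\<bar> * cmod t" "\<lambda>m. Re (p m * cnj t)" n] assms(3,4) that
    by auto
qed

lemma locally_finite_vertices_separated:
  assumes "locally_finite_vertices V" "finite P" "P \<subseteq> V"
  obtains \<delta> where "\<delta> > 0" "\<And>p w. p \<in> P \<Longrightarrow> w \<in> V \<Longrightarrow> dist w p < \<delta> \<Longrightarrow> w = p"
proof -
  define A where "A = (\<Union>p\<in>P. V \<inter> cball p 1)"
  define D where "D = (\<lambda>(w, p). dist w p) ` {(w, p) \<in> A \<times> P. w \<noteq> p}"
  define \<delta> where "\<delta> = Min (insert 1 D)"
  have "finite (V \<inter> cball p 1)" for p using assms(1) by (simp add: locally_finite_vertices_def)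
  hence "finite A" unfolding A_def using assms(2) by blast
  hence "finite D" unfolding D_def using assms(2) by (auto intro: finite_subset[of _ "A \<times> P"])
  hence "\<delta> > 0" by (auto simp: \<delta>_def D_def)
  moreover have "w = p" if "p \<in> P" "w \<in> V" "dist w p < \<delta>" for p w
  proof (rule ccontr)
    assume "w \<noteq> p"
    have "\<delta> \<le> 1" using \<open>finite D\<close> by (simp add: \<delta>_def)
    hence "w \<in> A" using that unfolding A_def by (auto simp: dist_commute intro!: bexI[of _ p])
    hence "dist w p \<in> D" using \<open>w \<noteq> p\<close> \<open>p \<in> P\<close> by (force simp: D_def)
    hence "\<delta> \<le> dist w p" using \<open>finite D\<close> by (simp add: \<delta>_def)
    thus False using that(3) by simp
  qed
  ultimately show thesis using that by blast
qed

section \<open>Groups of isometries of the plane\<close>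

locale isometry_group =
  fixes G :: "(complex \<Rightarrow> complex) set"
  assumes isom_group: "isom_group G"
begin

lemma dist_eq: "g \<in> G \<Longrightarrow> dist (g x) (g y) = dist x y"
  and bij: "g \<in> G \<Longrightarrow> bij g"
  and comp_closed: "g \<in> G \<Longrightarrow> h \<in> G \<Longrightarrow> g \<circ> h \<in> G"
  and inv_closed: "g \<in> G \<Longrightarrow> inv g \<in> G"
  and id_closed: "id \<in> G"
  using isom_group by (auto simp: isom_group_def isometry_def)

lemma norm_diff_eq: "g \<in> G \<Longrightarrow> cmod (g x - g y) = cmod (x - y)"
  using dist_eq by (simp add: dist_norm)

lemma inv_apply: "g \<in> G \<Longrightarrow> inv g (g x) = x"
  using bij by (simp add: bij_is_inj)

lemma apply_inv: "g \<in> G \<Longrightarrow> g (inv g x) = x"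
  using bij by (simp add: bij_is_surj surj_f_inv_f)

lemma mem_orbit_self: "v \<in> orbit G v"
  using id_closed by (metis id_apply image_eqI)

lemma quasi_transitive_representatives:
  assumes "quasi_transitive G V"
  obtains R where "finite R" "R \<subseteq> V" "\<And>v. v \<in> V \<Longrightarrow> \<exists>w\<in>R. \<exists>g\<in>G. v = g w"
proof -
  define R where "R = inv_into V (orbit G) ` orbit G ` V"
  have "finite R" using assms by (simp add: R_def quasi_transitive_def)
  moreover have "R \<subseteq> V" by (auto simp: R_def inv_into_into)
  moreover have "\<exists>w\<in>R. \<exists>g\<in>G. v = g w" if "v \<in> V" for v
  proof -
    define w where "w = inv_into V (orbit G) (orbit G v)"
    have "orbit G w = orbit G v" unfolding w_def by (rule f_inv_into_f) (use that in blast)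
    hence "v \<in> orbit G w" using mem_orbit_self by simp
    moreover have "w \<in> R" using that by (simp add: w_def R_def)
    ultimately show ?thesis by blast
  qed
  ultimately show thesis using that by blast
qed

lemma conj_transl_closed:
  assumes "g \<in> G" "transl t \<in> G"
  shows "transl (g t - g 0) \<in> G"
proof -
  have "g \<circ> transl t \<circ> inv g = transl (g t - g 0)"
    using isometry_add[OF dist_eq[OF \<open>g \<in> G\<close>]] apply_inv[OF \<open>g \<in> G\<close>] by (simp add: fun_eq_iff)
  thus ?thesis using assms comp_closed inv_closed by metis
qed

lemma transl_uminus_closed:
  assumes "transl t \<in> G" shows "transl (- t) \<in> G"
proof -
  have "inv (transl t) = transl (- t)"
    by (rule inv_unique_comp) (simp_all add: fun_eq_iff)
  thus ?thesis using inv_closed[OF assms] by simp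
qed

lemma transl_of_nat_closed:
  assumes "transl u \<in> G" shows "transl (of_nat k * u) \<in> G"
proof (induction k)
  case 0
  thus ?case using id_closed by (simp add: id_def)
next
  case (Suc k)
  have "transl u \<circ> transl (of_nat k * u) = transl (of_nat (Suc k) * u)"
    by (simp add: fun_eq_iff algebra_simps)
  thus ?case using comp_closed[OF assms Suc.IH] by simp
qed

lemma same_linear_part_transl_closed:
  assumes "g \<in> G" "h \<in> G" and same_linear_part: "\<And>z. g z - g 0 = h z - h 0"
  shows "transl (g 0 - h 0) \<in> G"
proof -
  have "g (inv h x) = h (inv h x) - h 0 + g 0" for x
    using same_linear_part[of "inv h x"] by (simp add: algebra_simps)
  hence "g \<circ> inv h = transl (g 0 - h 0)" by (simp add: fun_eq_iff apply_inv[OF assms(2)])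
  thus ?thesis using comp_closed[OF assms(1) inv_closed[OF assms(2)]] by simp
qed

lemma translation_free_commute:
  assumes no_transl: "\<And>t. transl t \<in> G \<Longrightarrow> t = 0"
    and "g \<in> G" "h \<in> G" "orientation_preserving g" "orientation_preserving h"
  shows "g \<circ> h = h \<circ> g"
proof -
  define d where "d = g (h 0) - h (g 0)"
  have commutator: "(g \<circ> h) z = (h \<circ> g) z + d" for z
    unfolding d_def comp_apply by (rule orientation_preserving_commutator[OF assms(4,5)])
  have "g \<circ> h \<circ> inv (h \<circ> g) = transl d"
    using commutator apply_inv[OF comp_closed[OF assms(3,2)]] by (simp add: fun_eq_iff)
  hence "d = 0" using assms(2,3) comp_closed inv_closed no_transl by metis
  thus ?thesis using commutator by (simp add: fun_eq_iff)
qed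

lemma translation_free_common_fixed_point:
  assumes no_transl: "\<And>t. transl t \<in> G \<Longrightarrow> t = 0"
  obtains c where "\<And>g. g \<in> G \<Longrightarrow> orientation_preserving g \<Longrightarrow> g c = c"
proof (cases "\<exists>r\<in>G. orientation_preserving r \<and> r 1 - r 0 \<noteq> 1")
  case True
  then obtain r where r: "r \<in> G" "orientation_preserving r" "r 1 - r 0 \<noteq> 1" by blast
  define a where "a = r 1 - r 0"
  define c where "c = r 0 / (1 - a)"
  have r_eq: "r z = a * z + r 0" for z unfolding a_def by (rule orientation_preservingD[OF r(2)])
  have "a \<noteq> 1" using r(3) by (simp add: a_def)
  hence r_fixes: "r z = z \<longleftrightarrow> z = c" for z
    unfolding r_eq[of z] c_def by (auto simp: field_simps)
  have "g c = c" if "g \<in> G" "orientation_preserving g" for g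
  proof -
    have "r (g c) = g (r c)"
      using translation_free_commute[OF no_transl r(1) that(1) r(2) that(2)] by (metis comp_apply)
    thus ?thesis using r_fixes by metis
  qed
  thus thesis using that by blast
next
  case False
  have "g 0 = 0" if "g \<in> G" "orientation_preserving g" for g
  proof -
    have "g 1 - g 0 = 1" using False that by blast
    hence "g = transl (g 0)"
      using orientation_preservingD[OF that(2)] by (metis ext mult_1 add.commute)
    thus ?thesis using no_transl that(1) by metis
  qed
  thus thesis using that by blast
qed

lemma translation_free_finite_orbit:
  assumes "\<And>t. transl t \<in> G \<Longrightarrow> t = 0"
  obtains c where "finite (orbit G c)"
proof -
  obtain c where c: "\<And>g. g \<in> G \<Longrightarrow> orientation_preserving g \<Longrightarrow> g c = c"
    using translation_free_common_fixed_point[OF assms] by blast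
  show thesis
  proof (cases "\<forall>g\<in>G. orientation_preserving g")
    case True
    hence "orbit G c \<subseteq> {c}" using c by auto
    thus thesis using that finite_subset by blast
  next
    case False
    then obtain g0 where g0: "g0 \<in> G" "\<not> orientation_preserving g0" by blast
    \<comment> \<open>two orientation-reversing elements differ by an orientation-preserving one\<close>
    have "g c \<in> {c, inv g0 c}" if "g \<in> G" for g
    proof (cases "orientation_preserving g")
      case False
      have "orientation_preserving (g0 \<circ> g)"
        by (rule orientation_preserving_comp_reversing[OF dist_eq[OF g0(1)] g0(2) dist_eq[OF that] False])
      hence "g0 (g c) = c" using c[OF comp_closed[OF g0(1) that]] by simp
      thus ?thesis using inv_apply[OF g0(1)] by (metis insertI2 singletonI)
    qed (simp add: c that)
    hence "orbit G c \<subseteq> {c, inv g0 c}" by blast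
    thus thesis using that finite_subset by blast
  qed
qed

lemma bounded_orbits_if_bounded_orbit:
  assumes "bounded (orbit G c)" shows "bounded (orbit G v)"
proof -
  obtain B where B: "\<And>g. g \<in> G \<Longrightarrow> cmod (g c) \<le> B" using assms by (auto simp: bounded_iff)
  have "cmod (g v) \<le> B + cmod (v - c)" if "g \<in> G" for g
    using norm_triangle_ineq2[of "g v" "g c"] B[OF that] norm_diff_eq[OF that, of v c] by linarith
  thus ?thesis by (auto simp: bounded_iff)
qed

lemma parallel_translations_linear_part:
  assumes "t \<noteq> 0" "transl t \<in> G" and parallel: "\<And>s. transl s \<in> G \<Longrightarrow> s \<in> span {t}"
    and "g \<in> G"
  obtains \<sigma> b where "\<sigma> \<in> {1, -1}"
    and "g = (\<lambda>z. \<sigma> * z + b) \<or> g = (\<lambda>z. \<sigma> * (t / cnj t) * cnj z + b)"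
proof -
  have "g t - g 0 \<in> span {t}" using parallel conj_transl_closed[OF \<open>g \<in> G\<close> \<open>transl t \<in> G\<close>] .
  then obtain r where r: "g t - g 0 = of_real r * t" by (auto simp: span_singleton scaleR_conv_of_real)
  have "\<bar>r\<bar> * cmod t = cmod t"
    using norm_diff_eq[OF \<open>g \<in> G\<close>, of t 0] r by (simp add: norm_mult)
  hence "\<bar>r\<bar> = 1" using \<open>t \<noteq> 0\<close> by simp
  hence \<sigma>: "of_real r \<in> {1, -1 :: complex}" by (cases "r \<ge> 0") auto
  from dist_eq[OF \<open>g \<in> G\<close>] show thesis
  proof (cases rule: isometry_complex_cases)
    case (direct a b)
    hence "a = of_real r" using r \<open>t \<noteq> 0\<close> by simp
    thus thesis using that direct \<sigma> by blast
  next
    case (opposite a b)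
    hence "a = of_real r * (t / cnj t)" using r \<open>t \<noteq> 0\<close> by (simp add: field_simps)
    thus thesis using that opposite \<sigma> by blast
  qed
qed

text \<open>For t \<noteq> 0, Im (z * cnj t) / cmod t is the signed distance of z from the line through 0 in
  direction t.\<close>
lemma parallel_translations_preserve_transversal:
  assumes "t \<noteq> 0" "transl t \<in> G" "\<And>s. transl s \<in> G \<Longrightarrow> s \<in> span {t}" "g \<in> G"
  shows "\<bar>Im (g z * cnj t) - Im (g 0 * cnj t)\<bar> = \<bar>Im (z * cnj t)\<bar>"
proof -
  obtain \<sigma> b where "\<sigma> \<in> {1, -1}"
    and "g = (\<lambda>z. \<sigma> * z + b) \<or> g = (\<lambda>z. \<sigma> * (t / cnj t) * cnj z + b)"
    using parallel_translations_linear_part[OF assms] .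
  hence "(g z - g 0) * cnj t = \<sigma> * (z * cnj t) \<or> (g z - g 0) * cnj t = \<sigma> * cnj (z * cnj t)"
    using \<open>t \<noteq> 0\<close> by auto
  moreover have "\<bar>Im (\<sigma> * w)\<bar> = \<bar>Im w\<bar>" "\<bar>Im (\<sigma> * cnj w)\<bar> = \<bar>Im w\<bar>" for w
    using \<open>\<sigma> \<in> {1, -1}\<close> by auto
  ultimately have "\<bar>Im ((g z - g 0) * cnj t)\<bar> = \<bar>Im (z * cnj t)\<bar>" by metis
  thus ?thesis by (simp only: left_diff_distrib minus_complex.sel)
qed

lemma parallel_translations_finite_transversal_offsets:
  assumes "t \<noteq> 0" "transl t \<in> G" "\<And>s. transl s \<in> G \<Longrightarrow> s \<in> span {t}"
  shows "finite ((\<lambda>g. Im (g 0 * cnj t)) ` G)"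
proof -
  define lin :: "(complex \<Rightarrow> complex) \<Rightarrow> complex \<Rightarrow> complex" where "lin g z = g z - g 0" for g z
  define offset where "offset g = Im (g 0 * cnj t)" for g :: "complex \<Rightarrow> complex"
  define candidates where "candidates = (\<lambda>\<sigma> z. \<sigma> * z) ` {1, -1} \<union>
    (\<lambda>\<sigma> z. \<sigma> * (t / cnj t) * cnj z) ` {1, -1}"
  have "lin g \<in> candidates" if g: "g \<in> G" for g
  proof -
    obtain \<sigma> b where "\<sigma> \<in> {1, -1}"
      and "g = (\<lambda>z. \<sigma> * z + b) \<or> g = (\<lambda>z. \<sigma> * (t / cnj t) * cnj z + b)"
      using parallel_translations_linear_part[OF assms g] .
    moreover from this(2) have "lin g = (\<lambda>z. \<sigma> * z) \<or> lin g = (\<lambda>z. \<sigma> * (t / cnj t) * cnj z)"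
      by (auto simp: lin_def)
    ultimately show ?thesis unfolding candidates_def by blast
  qed
  moreover have "finite candidates" by (simp add: candidates_def)
  ultimately have "finite (lin ` G)" by (meson finite_subset image_subsetI)
  \<comment> \<open>elements with the same linear part differ by a translation, which is parallel to t\<close>
  moreover have "offset g = offset (inv_into G lin (lin g))" if "g \<in> G" for g
  proof -
    define h where "h = inv_into G lin (lin g)"
    have "h \<in> G" "lin h = lin g" using that by (simp_all add: h_def inv_into_into f_inv_into_f)
    hence "h 0 - g 0 \<in> span {t}"
      using assms(3) same_linear_part_transl_closed[OF \<open>h \<in> G\<close> that] by (metis lin_def)
    hence "Im ((h 0 - g 0) * cnj t) = 0" using in_span_singleton_iff_Im_mult_cnj[OF assms(1)] by blast
    thus ?thesis by (simp add: offset_def h_def algebra_simps)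
  qed
  hence "offset ` G \<subseteq> (\<lambda>l. offset (inv_into G lin l)) ` lin ` G" by blast
  ultimately show ?thesis unfolding offset_def by (metis finite_surj finite_imageI)
qed

end

section \<open>Groups acting on a plane map\<close>

locale isometry_group_action = isometry_group +
  fixes V :: "complex set" and E :: "complex set set"
  assumes acts: "acts_on_map G V E"
begin

lemma image_vertices: "g \<in> G \<Longrightarrow> g ` V = V"
  and image_edges: "g \<in> G \<Longrightarrow> (\<lambda>e. g ` e) ` E = E"
  using acts unfolding acts_on_map_def by blast+

lemma maps_vertex: "g \<in> G \<Longrightarrow> v \<in> V \<Longrightarrow> g v \<in> V"
  using image_vertices by blast

lemma adj_image:
  assumes "g \<in> G" "adj V E x y"
  shows "adj V E (g x) (g y)"
proof -
  have inj: "inj g" using bij[OF assms(1)] bij_is_inj by blast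
  obtain e where e: "e \<in> E" "e \<inter> V = {x, y}" "x \<noteq> y" using assms(2) by (auto simp: adj_def)
  have "g ` e \<in> E" using image_edges[OF assms(1)] e(1) by blast
  moreover have "g ` e \<inter> V = {g x, g y}"
    using e(2) inj image_vertices[OF assms(1)] by (metis image_Int image_empty image_insert)
  moreover have "g x \<noteq> g y" using inj e(3) by (meson injD)
  ultimately show ?thesis by (auto simp: adj_def)
qed

lemma finite_orbit_if_bounded:
  assumes "locally_finite_vertices V" "v \<in> V" "bounded (orbit G v)"
  shows "finite (orbit G v)"
proof -
  obtain x B where "orbit G v \<subseteq> cball x B" using assms(3) bounded_subset_cball by blast
  hence "orbit G v \<subseteq> V \<inter> cball x B" using maps_vertex assms(2) by blast
  moreover have "finite (V \<inter> cball x B)" using assms(1) by (simp add: locally_finite_vertices_def)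
  ultimately show ?thesis using finite_subset by blast
qed

lemma finite_if_finite_orbits:
  assumes "quasi_transitive G V" "\<And>v. v \<in> V \<Longrightarrow> finite (orbit G v)"
  shows "finite V"
proof -
  have "V \<subseteq> \<Union> (orbit G ` V)" using mem_orbit_self by blast
  moreover have "finite (\<Union> (orbit G ` V))"
    using assms unfolding quasi_transitive_def by (intro finite_Union) auto
  ultimately show ?thesis using finite_subset by blast
qed

lemma exists_translation:
  assumes "infinite V" "locally_finite_vertices V" "quasi_transitive G V"
  obtains t where "t \<noteq> 0" "transl t \<in> G"
proof (rule ccontr)
  assume "\<not> thesis"
  hence "\<And>t. transl t \<in> G \<Longrightarrow> t = 0" using that by blast
  then obtain c where "finite (orbit G c)" by (rule translation_free_finite_orbit)
  hence "bounded (orbit G v)" for v by (rule bounded_orbits_if_bounded_orbit[OF finite_imp_bounded])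
  hence "v \<in> V \<Longrightarrow> finite (orbit G v)" for v using finite_orbit_if_bounded[OF assms(2)] by blast
  thus False using finite_if_finite_orbits[OF assms(3)] assms(1) by blast
qed

lemma edge_length_bounded:
  assumes "locally_finite_graph V E" "quasi_transitive G V"
  obtains D where "\<And>u w. adj V E u w \<Longrightarrow> cmod (u - w) \<le> D"
proof -
  obtain R where R: "finite R" "R \<subseteq> V" "\<And>v. v \<in> V \<Longrightarrow> \<exists>w\<in>R. \<exists>g\<in>G. v = g w"
    using quasi_transitive_representatives[OF assms(2)] by blast
  define N where "N = R \<union> (\<Union>x\<in>R. {y. adj V E x y})"
  have "finite N" using R(1,2) assms(1) by (auto simp: N_def locally_finite_graph_def)
  then obtain B where B: "\<And>y. y \<in> N \<Longrightarrow> cmod y \<le> B" using finite_imp_bounded bounded_iff by metis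
  \<comment> \<open>move an edge by an element of G so that it starts at a representative\<close>
  have "cmod (u - w) \<le> 2 * B" if uw: "adj V E u w" for u w
  proof -
    have "u \<in> V" using uw unfolding adj_def by blast
    then obtain x g where x: "x \<in> R" "g \<in> G" "u = g x" using R(3) by blast
    have "adj V E x (inv g w)" using adj_image[OF inv_closed[OF x(2)] uw] x by (simp add: inv_apply)
    hence "cmod x \<le> B" "cmod (inv g w) \<le> B" using B x(1) by (auto simp: N_def)
    moreover have "cmod (u - w) = cmod (x - inv g w)"
      using norm_diff_eq[OF inv_closed[OF x(2)], of u w] x by (simp add: inv_apply)
    ultimately show ?thesis using norm_triangle_ineq4[of x "inv g w"] by linarith
  qed
  thus thesis using that by blast
qed

lemma parallel_translations_vertices_in_strip:
  assumes "quasi_transitive G V" "t \<noteq> 0" "transl t \<in> G" "\<And>s. transl s \<in> G \<Longrightarrow> s \<in> span {t}"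
  obtains W where "\<And>v. v \<in> V \<Longrightarrow> \<bar>Im (v * cnj t)\<bar> \<le> W"
proof -
  obtain R where R: "finite R" "R \<subseteq> V" "\<And>v. v \<in> V \<Longrightarrow> \<exists>w\<in>R. \<exists>g\<in>G. v = g w"
    using quasi_transitive_representatives[OF assms(1)] by blast
  define Q where "Q = (\<lambda>g. Im (g 0 * cnj t)) ` G"
  have "finite Q" unfolding Q_def by (rule parallel_translations_finite_transversal_offsets[OF assms(2-4)])
  have "\<bar>Im (v * cnj t)\<bar> \<le> (\<Sum>w\<in>R. \<bar>Im (w * cnj t)\<bar>) + (\<Sum>q\<in>Q. \<bar>q\<bar>)" if "v \<in> V" for v
  proof -
    obtain w g where wg: "w \<in> R" "g \<in> G" "v = g w" using R(3) \<open>v \<in> V\<close> by blast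
    have "\<bar>Im (w * cnj t)\<bar> \<le> (\<Sum>w\<in>R. \<bar>Im (w * cnj t)\<bar>)"
      by (rule member_le_sum) (use wg(1) R(1) in auto)
    moreover have "\<bar>Im (g 0 * cnj t)\<bar> \<le> (\<Sum>q\<in>Q. \<bar>q\<bar>)"
      by (rule member_le_sum[of "Im (g 0 * cnj t)"]) (use wg(2) \<open>finite Q\<close> in \<open>auto simp: Q_def\<close>)
    moreover have "\<bar>Im (g w * cnj t) - Im (g 0 * cnj t)\<bar> = \<bar>Im (w * cnj t)\<bar>"
      by (rule parallel_translations_preserve_transversal[OF assms(2-4) wg(2)])
    ultimately show ?thesis unfolding wg(3) by linarith
  qed
  thus thesis by (rule that)
qed

lemma parallel_translations_finite_window:
  assumes "locally_finite_vertices V" "quasi_transitive G V" "t \<noteq> 0" "transl t \<in> G"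
    "\<And>s. transl s \<in> G \<Longrightarrow> s \<in> span {t}"
  shows "finite {x \<in> V. \<bar>Re (x * cnj t)\<bar> \<le> K}"
proof -
  obtain W where W: "\<And>x. x \<in> V \<Longrightarrow> \<bar>Im (x * cnj t)\<bar> \<le> W"
    using parallel_translations_vertices_in_strip[OF assms(2-5)] by blast
  have "{x \<in> V. \<bar>Re (x * cnj t)\<bar> \<le> K} \<subseteq> V \<inter> cball 0 ((K + W) / cmod t)"
  proof
    fix x assume "x \<in> {x \<in> V. \<bar>Re (x * cnj t)\<bar> \<le> K}"
    hence "x \<in> V" "\<bar>Re (x * cnj t)\<bar> \<le> K" by simp_all
    hence "cmod (x * cnj t) \<le> K + W" using W[of x] cmod_le[of "x * cnj t"] by linarith
    hence "cmod x \<le> (K + W) / cmod t" using assms(3) by (simp add: norm_mult field_simps)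
    thus "x \<in> V \<inter> cball 0 ((K + W) / cmod t)" using \<open>x \<in> V\<close> by simp
  qed
  moreover have "finite (V \<inter> cball 0 ((K + W) / cmod t))"
    using assms(1) by (simp add: locally_finite_vertices_def)
  ultimately show ?thesis by (rule finite_subset)
qed

lemma periodic_walk:
  assumes "transl u \<in> G" "n \<noteq> 0" "p n = p 0 + u" "\<And>i. i < n \<Longrightarrow> adj V E (p i) (p (Suc i))"
  shows "adj V E (p (m mod n) + of_nat (m div n) * u) (p (Suc m mod n) + of_nat (Suc m div n) * u)"
proof -
  have "p (Suc m mod n) + of_nat (Suc m div n) * u = p (Suc (m mod n)) + of_nat (m div n) * u"
  proof (cases "Suc (m mod n) = n")
    case True
    hence "Suc m mod n = 0" "Suc m div n = Suc (m div n)" by (simp_all add: mod_Suc div_Suc)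
    thus ?thesis using True assms(3) by (simp add: algebra_simps)
  qed (simp add: mod_Suc div_Suc)
  moreover have "adj V E (p (m mod n)) (p (Suc (m mod n)))" using assms(2,4) by simp
  hence "adj V E (p (m mod n) + of_nat (m div n) * u) (p (Suc (m mod n)) + of_nat (m div n) * u)"
    using adj_image[OF transl_of_nat_closed[OF assms(1)]] by simp
  ultimately show ?thesis by simp
qed

lemma ray_to_infinity:
  assumes "graph_connected V E" "v \<in> V" "u \<noteq> 0" "transl u \<in> G"
  obtains r where "is_ray V E r" "filterlim (\<lambda>k. Re (r k * cnj u)) at_top sequentially"
proof -
  obtain p n where p: "p 0 = v" "p n = v + u" "\<And>i. i < n \<Longrightarrow> adj V E (p i) (p (Suc i))"
    using assms(1,2) maps_vertex[OF assms(4,2)]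
    unfolding graph_connected_def connected_avoiding_def by force
  have "n \<noteq> 0"
  proof
    assume "n = 0"
    thus False using p(1,2) assms(3) by simp
  qed
  \<comment> \<open>repeat the path from v to v + u periodically\<close>
  define w where "w m = p (m mod n) + of_nat (m div n) * u" for m
  have walk: "adj V E (w m) (w (Suc m))" for m
    unfolding w_def using p(1,2) by (intro periodic_walk[where p = p, OF assms(4) \<open>n \<noteq> 0\<close> _ p(3)]) simp
  define c where "c = Min ((\<lambda>j. Re (p j * cnj u)) ` {..<n})"
  have "Re (w m * cnj u) = Re (p (m mod n) * cnj u) + real (m div n) * (cmod u)^2" for m
    by (simp add: w_def distrib_right mult.assoc complex_norm_square[symmetric] del: of_real_power)
  moreover have "c \<le> Re (p (m mod n) * cnj u)" for m using \<open>n \<noteq> 0\<close> by (simp add: c_def)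
  ultimately have w_lower: "c + real (m div n) * (cmod u)^2 \<le> Re (w m * cnj u)" for m
    by (simp add: add_right_mono)
  have "filterlim (\<lambda>m. real (m div n)) at_top sequentially"
    using filterlim_compose[OF filterlim_real_sequentially filterlim_at_top_div_const_nat] \<open>n \<noteq> 0\<close>
    by simp
  hence "filterlim (\<lambda>m. c + real (m div n) * (cmod u)^2) at_top sequentially"
    using assms(3) by (intro filterlim_tendsto_add_at_top filterlim_at_top_mult_tendsto_pos tendsto_const) auto
  hence w_lim: "filterlim (\<lambda>m. Re (w m * cnj u)) at_top sequentially"
    by (rule filterlim_at_top_mono) (intro always_eventually allI w_lower)
  have "finite {m. w m = x}" for x
  proof -
    obtain N where "\<And>m. m \<ge> N \<Longrightarrow> Re (x * cnj u) < Re (w m * cnj u)"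
      using w_lim by (auto simp: filterlim_at_top_dense eventually_sequentially)
    hence "{m. w m = x} \<subseteq> {..<N}" by (force simp: not_less[symmetric])
    thus ?thesis using finite_subset by blast
  qed
  then obtain T where "strict_mono T" "is_ray V E (w \<circ> T)" using walk_contains_ray walk by blast
  moreover have "filterlim (\<lambda>k. Re ((w \<circ> T) k * cnj u)) at_top sequentially"
    unfolding comp_apply by (rule filterlim_compose[OF w_lim filterlim_subseq[OF \<open>strict_mono T\<close>]])
  ultimately show thesis using that by blast
qed

lemma parallel_translations_not_one_ended:
  assumes "graph_connected V E" "locally_finite_graph V E" "locally_finite_vertices V"
    "quasi_transitive G V" "v \<in> V" "t \<noteq> 0" "transl t \<in> G"
    "\<And>s. transl s \<in> G \<Longrightarrow> s \<in> span {t}"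
  shows "\<not> one_ended V E"
proof
  assume one_ended: "one_ended V E"
  obtain D where D: "\<And>x y. adj V E x y \<Longrightarrow> cmod (x - y) \<le> D"
    using edge_length_bounded[OF assms(2,4)] by blast
  obtain r1 where r1: "is_ray V E r1" "filterlim (\<lambda>k. Re (r1 k * cnj t)) at_top sequentially"
    using ray_to_infinity[OF assms(1,5,6,7)] by blast
  obtain r2 where r2: "is_ray V E r2" "filterlim (\<lambda>k. Re (r2 k * cnj (- t))) at_top sequentially"
    using ray_to_infinity[OF assms(1,5) _ transl_uminus_closed[OF assms(7)]] assms(6) by auto
  define K where "K = \<bar>D\<bar> * cmod t"
  define S where "S = {x \<in> V. \<bar>Re (x * cnj t)\<bar> \<le> K}"
  have "finite S" unfolding S_def by (rule parallel_translations_finite_window[OF assms(3,4,6-8)])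
  moreover have "ray_equiv V E r1 r2" using one_ended r1(1) r2(1) by (simp add: one_ended_def)
  ultimately obtain N where N: "\<forall>i\<ge>N. \<forall>j\<ge>N. connected_avoiding V E S (r1 i) (r2 j)"
    unfolding ray_equiv_def by blast
  have "\<forall>\<^sub>F k in sequentially. N \<le> k \<and> K < Re (r1 k * cnj t)"
    using r1(2) unfolding filterlim_at_top_dense by (intro eventually_conj eventually_ge_at_top) blast
  then obtain i where i: "i \<ge> N" "K < Re (r1 i * cnj t)"
    using eventually_happens'[OF sequentially_bot] by blast
  have "\<forall>\<^sub>F k in sequentially. N \<le> k \<and> K < Re (r2 k * cnj (- t))"
    using r2(2) unfolding filterlim_at_top_dense by (intro eventually_conj eventually_ge_at_top) blast
  then obtain j where j: "j \<ge> N" "K < Re (r2 j * cnj (- t))"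
    using eventually_happens'[OF sequentially_bot] by blast
  obtain p n where p: "p 0 = r1 i" "p n = r2 j" "\<And>m. m \<le> n \<Longrightarrow> p m \<in> V - S"
    "\<And>m. m < n \<Longrightarrow> adj V E (p m) (p (Suc m))"
    using N i(1) j(1) unfolding connected_avoiding_def by blast
  have "K < Re (p 0 * cnj t)" "Re (p n * cnj t) < - K" using i(2) j(2) p(1,2) by simp_all
  then obtain m where "m \<le> n" "\<bar>Re (p m * cnj t)\<bar> \<le> K"
    using short_edges_walk_crosses_window[where p = p, OF D p(4)] unfolding K_def by blast
  thus False using p(3) by (auto simp: S_def)
qed

lemma independent_translations_discrete:
  assumes "locally_finite_vertices V" "v \<in> V" "t \<noteq> 0" "transl t \<in> G" "transl t' \<in> G"
    "t' \<notin> span {t}"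
  shows "discrete_isom_group G"
proof -
  define P where "P = {v, v + t, v + t'}"
  have "P \<subseteq> V"
    using assms(2) maps_vertex[OF assms(4,2)] maps_vertex[OF assms(5,2)] by (simp add: P_def)
  then obtain \<delta> where "\<delta> > 0" and \<delta>: "\<And>p w. p \<in> P \<Longrightarrow> w \<in> V \<Longrightarrow> dist w p < \<delta> \<Longrightarrow> w = p"
    using locally_finite_vertices_separated[OF assms(1)] by (metis P_def finite.emptyI finite.insertI)
  define R where "R = cmod v + cmod t + cmod t'"
  have "cmod (v + t) \<le> R" "cmod (v + t') \<le> R"
    using norm_triangle_ineq[of v t] norm_triangle_ineq[of v t'] norm_ge_zero[of t] norm_ge_zero[of t']
    unfolding R_def by linarith+
  hence "P \<subseteq> cball 0 R" by (simp add: P_def R_def)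
  have "g = id" if "g \<in> G" and close: "\<forall>x\<in>cball 0 R. dist (g x) x < \<delta>" for g
  proof -
    have "g p = p" if "p \<in> P" for p
      using \<delta>[OF that maps_vertex[OF \<open>g \<in> G\<close>]] close \<open>P \<subseteq> cball 0 R\<close> \<open>P \<subseteq> V\<close> that by blast
    thus ?thesis
      by (intro isometry_fixing_triangle_is_id[OF dist_eq[OF \<open>g \<in> G\<close>] assms(3,6), where v = v])
        (simp_all add: P_def)
  qed
  moreover have "R > 0" using assms(3) by (simp add: R_def add_nonneg_pos add_pos_nonneg)
  ultimately show ?thesis using \<open>\<delta> > 0\<close> unfolding discrete_isom_group_def by blast
qed

end

theorem lemma3p1:
  fixes V :: "complex set" and E :: "complex set set"
    and G :: "(complex \<Rightarrow> complex) set"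
  assumes "plane_map V E"
    and "locally_finite_graph V E"
    and "one_ended V E"
    and "locally_finite_vertices V"
    and "isom_group G"
    and "acts_on_map G V E"
    and "quasi_transitive G V"
  shows "wallpaper_group G"
proof -
  interpret isometry_group_action G V E
    using assms(5,6) by unfold_locales
  have "infinite V" and connected: "graph_connected V E" using assms(1) by (auto simp: plane_map_def)
  then obtain v where "v \<in> V" using infinite_imp_nonempty by blast
  obtain t where t: "t \<noteq> 0" "transl t \<in> G"
    using exists_translation[OF \<open>infinite V\<close> assms(4,7)] by blast
  obtain t' where t': "transl t' \<in> G" "t' \<notin> span {t}"
    using parallel_translations_not_one_ended[OF connected assms(2,4,7) \<open>v \<in> V\<close> t] assms(3) by blast
  have "independent {t, t'}" "t \<noteq> t'"
    using t(1) t'(2) span_base[of t "{t}"] by (auto simp: independent_insert insert_commute)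
  thus ?thesis unfolding wallpaper_group_def
    using assms(5) independent_translations_discrete[OF assms(4) \<open>v \<in> V\<close> t t'] t t' by blast
qed

end
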